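(* Let $L$ be a precompact Hausdorff co-Heyting algebra, identified with its image in $\widehat L$. Then: (1) $L$ and $\widehat L$ have the same completely join irreducible elements; (2) every join irreducible element of $L$ is completely join irreducible; (3) for every $x\in\mathcal I^{!\vee}(L)$, the cofoundation rank of $x$ in the ordered set $\mathcal I^{!\vee}(L)$ is finite and equal to $\operatorname{codim}_L x$; (4) $\mathcal I^{!\vee}(L)$ satisfies the ascending chain condition; (5) for every $a\in L$, $a$ is the complete join in $L$ of the set of its join irreducible components.
   Context: A co-Heyting algebra is a bounded distributive lattice $(L,0,1,\vee,\wedge)$ such that $a-b=\min\{c\in L: a\le b\vee c\}$ exists for all $a,b$. For an ideal $I$, $L/I$ is the quotient by $a\equiv_I b\iff(a-b)\vee(b-a)\in I$. $\operatorname{Spec}L$ is the set of prime filters ordered by inclusion; height = foundation rank there; $\operatorname{codim}_La=\min\{\operatorname{height}\mathfrak p: a\in\mathfrak p\}$ ($+\infty$ if none); $dL=\{a:\operatorname{codim}_La\ge d\}$ is an ideal. $L$ is Hausdorff if every nonzero element has finite codimension; precompact if $L/dL$ is finite for every positive integer $d$. $\widehat L$ is the projective limit of the quotients $L/dL$ under the canonical surjections $L/(d+1)L\to L/dL$, and $L$ embeds in it diagonally. $x\ne0$ is join irreducible if $x\le a\vee b$ implies $x\le a$ or $x\le b$; completely join irreducible if $x\le\bigvee A$ (for any $A$ whose join exists) implies $x\le a$ for some $a\in A$; $\mathcal I^{!\vee}(L)$ is the set of completely join irreducible elements. The join irreducible components of $a$ are the maximal elements of the set of join irreducible elements below $a$.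 The cofoundation rank of $x$ in an ordered set $E$ is its foundation rank for the reverse order (rank $\ge\beta+1$ iff some strictly larger element has rank $\ge\beta$; limits by intersection). *)

theory Defs
  imports Main "HOL-Library.Extended_Nat"
begin

(* The co-Heyting algebra L is the whole carrier of a type 'a of class
   {distrib_lattice, bounded_lattice}: 0 = bot, 1 = top, join = sup, meet = inf. *)

definition co_heyting :: "'a::{distrib_lattice,bounded_lattice} itself \<Rightarrow> bool" where
  "co_heyting _ \<longleftrightarrow> (\<forall>a b::'a. \<exists>c. a \<le> sup b c \<and> (\<forall>c'. a \<le> sup b c' \<longrightarrow> c \<le> c'))"

definition cominus :: "'a::{distrib_lattice,bounded_lattice} \<Rightarrow> 'a \<Rightarrow> 'a" where
  "cominus a b = (THE c. a \<le> sup b c \<and> (\<forall>c'. a \<le> sup b c' \<longrightarrow> c \<le> c'))"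

definition prime_filter :: "'a::{distrib_lattice,bounded_lattice} set \<Rightarrow> bool" where
  "prime_filter p \<longleftrightarrow> top \<in> p \<and> bot \<notin> p \<and>
     (\<forall>a b. a \<in> p \<longrightarrow> a \<le> b \<longrightarrow> b \<in> p) \<and>
     (\<forall>a b. a \<in> p \<longrightarrow> b \<in> p \<longrightarrow> inf a b \<in> p) \<and>
     (\<forall>a b. sup a b \<in> p \<longrightarrow> a \<in> p \<or> b \<in> p)"

(* Rank predicate: "rank of x in E w.r.t. the strict relation R is \<ge> n"
   (R y x means y is strictly below x for the relevant order):
   rank \<ge> 0 always; rank \<ge> n+1 iff some y \<in> E with R y x has rank \<ge> n. *)
fun rank_ge :: "('b \<Rightarrow> 'b \<Rightarrow> bool) \<Rightarrow> 'b set \<Rightarrow> 'b \<Rightarrow> nat \<Rightarrow> bool" where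
  "rank_ge R E x 0 = True"
| "rank_ge R E x (Suc n) = (\<exists>y\<in>E. R y x \<and> rank_ge R E y n)"

(* Foundation rank, with all ranks \<ge> \<omega> (and undefined ranks) collapsed to \<infinity>. *)
definition rank :: "('b \<Rightarrow> 'b \<Rightarrow> bool) \<Rightarrow> 'b set \<Rightarrow> 'b \<Rightarrow> enat" where
  "rank R E x = Sup {enat n | n. rank_ge R E x n}"

definition Spec :: "'a::{distrib_lattice,bounded_lattice} set set" where
  "Spec = {p. prime_filter p}"

definition height :: "'a::{distrib_lattice,bounded_lattice} set \<Rightarrow> enat" where
  "height p = rank (\<lambda>q p. q \<subset> p) Spec p"

definition codim :: "'a::{distrib_lattice,bounded_lattice} \<Rightarrow> enat" where
  "codim a = Inf {height p | p. p \<in> Spec \<and> a \<in> p}"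

definition dL :: "nat \<Rightarrow> 'a::{distrib_lattice,bounded_lattice} set" where
  "dL d = {a. codim a \<ge> enat d}"

definition qrel :: "'a::{distrib_lattice,bounded_lattice} set \<Rightarrow> ('a \<times> 'a) set" where
  "qrel I = {(a, b). sup (cominus a b) (cominus b a) \<in> I}"

definition quot :: "'a::{distrib_lattice,bounded_lattice} set \<Rightarrow> 'a set set" where
  "quot I = UNIV // qrel I"

definition quot_le :: "'a::{distrib_lattice,bounded_lattice} set \<Rightarrow> 'a set \<Rightarrow> 'a set \<Rightarrow> bool" where
  "quot_le I X Y \<longleftrightarrow> (\<exists>a\<in>X. \<exists>b\<in>Y. (sup a b, b) \<in> qrel I)"

definition hausdorff :: "'a::{distrib_lattice,bounded_lattice} itself \<Rightarrow> bool" where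
  "hausdorff _ \<longleftrightarrow> (\<forall>a::'a. a \<noteq> bot \<longrightarrow> codim a \<noteq> \<infinity>)"

definition precompact :: "'a::{distrib_lattice,bounded_lattice} itself \<Rightarrow> bool" where
  "precompact _ \<longleftrightarrow> (\<forall>d::nat. d \<ge> 1 \<longrightarrow> finite (quot (dL d :: 'a set)))"

(* Completion \<widehat>L: x d is the component in L/(d+1)L (index shifted by one),
   compatible under the canonical surjections L/(d+2)L \<rightarrow> L/(d+1)L,
   [a] \<mapsto> [a]. *)
definition hatL :: "(nat \<Rightarrow> 'a::{distrib_lattice,bounded_lattice} set) set" where
  "hatL = {x. (\<forall>d. x d \<in> quot (dL (Suc d))) \<and>
              (\<forall>d. x d = qrel (dL (Suc d)) `` x (Suc d))}"

definition hat_le :: "(nat \<Rightarrow> 'a::{distrib_lattice,bounded_lattice} set) \<Rightarrow> (nat \<Rightarrow> 'a set) \<Rightarrow> bool" where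
  "hat_le x y \<longleftrightarrow> (\<forall>d. quot_le (dL (Suc d)) (x d) (y d))"

definition hat_emb :: "'a::{distrib_lattice,bounded_lattice} \<Rightarrow> nat \<Rightarrow> 'a set" where
  "hat_emb a = (\<lambda>d. qrel (dL (Suc d)) `` {a})"

definition is_lub :: "('b \<Rightarrow> 'b \<Rightarrow> bool) \<Rightarrow> 'b set \<Rightarrow> 'b set \<Rightarrow> 'b \<Rightarrow> bool" where
  "is_lub le E A s \<longleftrightarrow> s \<in> E \<and> (\<forall>a\<in>A. le a s) \<and> (\<forall>t\<in>E. (\<forall>a\<in>A. le a t) \<longrightarrow> le s t)"

definition cji :: "('b \<Rightarrow> 'b \<Rightarrow> bool) \<Rightarrow> 'b set \<Rightarrow> 'b \<Rightarrow> 'b set" where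
  "cji le E bt = {x \<in> E. x \<noteq> bt \<and>
      (\<forall>A s. A \<subseteq> E \<longrightarrow> is_lub le E A s \<longrightarrow> le x s \<longrightarrow> (\<exists>a\<in>A. le x a))}"

definition join_irred :: "'a::{distrib_lattice,bounded_lattice} \<Rightarrow> bool" where
  "join_irred x \<longleftrightarrow> x \<noteq> bot \<and> (\<forall>a b. x \<le> sup a b \<longrightarrow> x \<le> a \<or> x \<le> b)"

definition ji_components :: "'a::{distrib_lattice,bounded_lattice} \<Rightarrow> 'a set" where
  "ji_components a = {x. join_irred x \<and> x \<le> a \<and>
      (\<forall>y. join_irred y \<longrightarrow> y \<le> a \<longrightarrow> x \<le> y \<longrightarrow> y = x)}"

end

theory Submission
  imports Defs
begin

text \<open>Only finitely many prime filters have height at most \<open>n\<close>: each of them is a union of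
  classes of the finite quotient \<open>L/(n+1)L\<close>. Combined with prime avoidance and the fact that a
  prime filter realising \<open>codim (a - w)\<close> omits \<open>w\<close>, this makes every prime filter of finite
  height principal, generated by a join irreducible element, and every ideal \<open>dL k\<close> principal.
  So \<open>x \<mapsto> {y. x \<le> y}\<close> identifies the join irreducible elements with the prime filters of
  finite height, and \<open>codim x\<close> is the height of the image; this gives the rank formula, the
  ascending chain condition (only finitely many join irreducible elements have codimension at
  most \<open>d\<close>) and the decomposition into components.

  Complete join irreducibility, in \<open>L\<close> as in its completion, reduces to finite joins: modulo
  \<open>dL (n + 1)\<close>, where \<open>n = codim x\<close>, an arbitrary family has finitely many classes, and
  \<open>x \<le> t \<squnion> M\<close> with \<open>dL (n + 1) = {b. b \<le> M}\<close> forces \<open>x \<le> t\<close>. Conversely, every element of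
  the completion is the join of the join irreducible elements of \<open>L\<close> below it, because modulo
  \<open>dL (d + 1)\<close> each \<open>a\<close> is the join of the finitely many join irreducible elements of
  codimension at most \<open>d\<close> below it.\<close>

section \<open>Foundation rank\<close>

lemma rank_ge_mono: "rank_ge R E x n \<Longrightarrow> m \<le> n \<Longrightarrow> rank_ge R E x m"
proof (induction n arbitrary: x m)
  case (Suc n)
  then show ?case by (cases m) auto
qed simp

lemma enat_le_rank_iff: "enat n \<le> rank R E x \<longleftrightarrow> rank_ge R E x n"
proof
  assume "rank_ge R E x n"
  then show "enat n \<le> rank R E x"
    unfolding rank_def by (auto intro: Sup_upper)
next
  assume le: "enat n \<le> rank R E x"
  show "rank_ge R E x n"
  proof (rule ccontr)
    assume not_ge: "\<not> rank_ge R E x n"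
    then have "\<forall>k. rank_ge R E x k \<longrightarrow> k < n"
      by (metis rank_ge_mono not_less)
    then have "rank R E x \<le> enat (n - 1)"
      unfolding rank_def by (auto intro!: Sup_least)
    from order_trans[OF le this] not_ge show False
      by (cases n) auto
  qed
qed

lemma rank_step:
  assumes "y \<in> E" and "R y x"
  shows "eSuc (rank R E y) \<le> rank R E x"
proof -
  have "eSuc (rank R E y) = Sup (eSuc ` {enat n | n. rank_ge R E y n})"
    unfolding rank_def by (rule eSuc_Sup) (auto intro: exI[of _ 0])
  also have "\<dots> \<le> rank R E x"
  proof (rule Sup_least)
    fix z assume "z \<in> eSuc ` {enat n | n. rank_ge R E y n}"
    then obtain n where "z = enat (Suc n)" and "rank_ge R E y n"
      by (auto simp: eSuc_enat)
    with assms show "z \<le> rank R E x"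
      by (auto simp: enat_le_rank_iff)
  qed
  finally show ?thesis .
qed

lemma rank_ge_transfer:
  assumes maps: "f ` E \<subseteq> E'"
    and rel: "\<And>x y. x \<in> E \<Longrightarrow> y \<in> E \<Longrightarrow> R' (f y) (f x) \<longleftrightarrow> R y x"
    and onto: "\<And>x y'. x \<in> E \<Longrightarrow> y' \<in> E' \<Longrightarrow> R' y' (f x) \<Longrightarrow> y' \<in> f ` E"
    and "x \<in> E"
  shows "rank_ge R' E' (f x) n \<longleftrightarrow> rank_ge R E x n"
  using \<open>x \<in> E\<close>
proof (induction n arbitrary: x)
  case (Suc n)
  show ?case
  proof
    assume "rank_ge R' E' (f x) (Suc n)"
    then obtain y' where "y' \<in> E'" "R' y' (f x)" "rank_ge R' E' y' n"
      by auto
    moreover from onto[OF Suc.prems this(1,2)] obtain y where "y \<in> E" "y' = f y"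
      by blast
    ultimately show "rank_ge R E x (Suc n)"
      using Suc rel by auto
  next
    assume "rank_ge R E x (Suc n)"
    then obtain y where "y \<in> E" "R y x" "rank_ge R E y n"
      by auto
    then have "f y \<in> E'" "R' (f y) (f x)" "rank_ge R' E' (f y) n"
      using Suc rel maps by auto
    then show "rank_ge R' E' (f x) (Suc n)"
      by auto
  qed
qed simp

lemma rank_transfer:
  assumes "f ` E \<subseteq> E'"
    and "\<And>x y. x \<in> E \<Longrightarrow> y \<in> E \<Longrightarrow> R' (f y) (f x) \<longleftrightarrow> R y x"
    and "\<And>x y'. x \<in> E \<Longrightarrow> y' \<in> E' \<Longrightarrow> R' y' (f x) \<Longrightarrow> y' \<in> f ` E"
    and "x \<in> E"
  shows "rank R' E' (f x) = rank R E x"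
  unfolding rank_def
  using rank_ge_transfer[where f = f and E = E and E' = E' and R = R and R' = R', OF assms]
  by simp

section \<open>Prime filters\<close>

lemma Spec_top: "p \<in> Spec \<Longrightarrow> top \<in> p"
  by (simp add: Spec_def prime_filter_def)

lemma Spec_bot: "p \<in> Spec \<Longrightarrow> bot \<notin> p"
  by (simp add: Spec_def prime_filter_def)

lemma Spec_up: "p \<in> Spec \<Longrightarrow> a \<in> p \<Longrightarrow> a \<le> b \<Longrightarrow> b \<in> p"
  by (simp add: Spec_def prime_filter_def)

lemma Spec_inf: "p \<in> Spec \<Longrightarrow> a \<in> p \<Longrightarrow> b \<in> p \<Longrightarrow> inf a b \<in> p"
  by (simp add: Spec_def prime_filter_def)

lemma Spec_sup_iff: "p \<in> Spec \<Longrightarrow> sup a b \<in> p \<longleftrightarrow> a \<in> p \<or> b \<in> p"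
  using Spec_up[of p a "sup a b"] Spec_up[of p b "sup a b"]
  by (auto simp: Spec_def prime_filter_def)

lemma principal_filter_in_Spec_iff: "{y. x \<le> y} \<in> Spec \<longleftrightarrow> join_irred x"
proof
  assume "{y. x \<le> y} \<in> Spec"
  then have "x \<noteq> bot" and "\<And>a b. x \<le> sup a b \<Longrightarrow> x \<le> a \<or> x \<le> b"
    using Spec_bot Spec_sup_iff by fastforce+
  then show "join_irred x"
    by (simp add: join_irred_def)
next
  assume "join_irred x"
  then have "x \<noteq> bot" and "\<And>a b. x \<le> sup a b \<Longrightarrow> x \<le> a \<or> x \<le> b"
    by (simp_all add: join_irred_def)
  moreover have "\<And>a b. x \<le> a \<Longrightarrow> a \<le> b \<Longrightarrow> x \<le> b"
    by (rule order_trans)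
  ultimately show "{y. x \<le> y} \<in> Spec"
    unfolding Spec_def prime_filter_def by (simp add: bot_unique)
qed

lemma principal_filter_psubset_iff: "{y. y' \<le> y} \<subset> {y. x \<le> y} \<longleftrightarrow> x < y'"
  for x y' :: "'a::order"
proof
  assume sub: "{y. y' \<le> y} \<subset> {y. x \<le> y}"
  then have "x \<le> y'"
    using order_refl[of y'] by blast
  moreover obtain z where "x \<le> z" and "\<not> y' \<le> z"
    using psubset_imp_ex_mem[OF sub] by blast
  then have "\<not> y' \<le> x"
    using order_trans by blast
  ultimately show "x < y'"
    by (simp add: less_le_not_le)
next
  assume "x < y'"
  then have "x \<le> y'" and "\<not> y' \<le> x"
    by (simp_all add: less_le_not_le)
  then have "{y. y' \<le> y} \<subseteq> {y. x \<le> y}" and "x \<notin> {y. y' \<le> y}"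
    using order_trans by auto
  then show "{y. y' \<le> y} \<subset> {y. x \<le> y}"
    by blast
qed

lemma join_irred_le_Sup_fin:
  assumes "join_irred x" and "finite B" and "B \<noteq> {}" and "x \<le> Sup_fin B"
  shows "\<exists>b\<in>B. x \<le> b"
  using assms(2-4)
proof (induction B rule: finite_ne_induct)
  case (insert b B)
  then show ?case
    using assms(1) unfolding join_irred_def by auto
qed simp

lemma cji_imp_join_irred: "x \<in> cji (\<le>) UNIV bot \<Longrightarrow> join_irred x"
proof -
  assume x: "x \<in> cji (\<le>) UNIV bot"
  have "x \<le> a \<or> x \<le> b" if "x \<le> sup a b" for a b
  proof -
    have "is_lub (\<le>) UNIV {a, b} (sup a b)"
      unfolding is_lub_def by simp
    with x that show ?thesis
      unfolding cji_def by blast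
  qed
  with x show "join_irred x"
    unfolding cji_def join_irred_def by blast
qed

definition lattice_filter :: "'a::lattice set \<Rightarrow> bool" where
  "lattice_filter F \<longleftrightarrow>
     (\<forall>a b. a \<in> F \<longrightarrow> a \<le> b \<longrightarrow> b \<in> F) \<and> (\<forall>a b. a \<in> F \<longrightarrow> b \<in> F \<longrightarrow> inf a b \<in> F)"

lemma lattice_filter_up: "lattice_filter F \<Longrightarrow> a \<in> F \<Longrightarrow> a \<le> b \<Longrightarrow> b \<in> F"
  by (simp add: lattice_filter_def)

lemma lattice_filter_inf: "lattice_filter F \<Longrightarrow> a \<in> F \<Longrightarrow> b \<in> F \<Longrightarrow> inf a b \<in> F"
  by (simp add: lattice_filter_def)

lemma lattice_filter_extend:
  assumes "lattice_filter M"
  shows "lattice_filter {z. \<exists>m\<in>M. inf m c \<le> z}"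
  unfolding lattice_filter_def
proof (intro conjI allI impI)
  fix a b
  assume "a \<in> {z. \<exists>m\<in>M. inf m c \<le> z}" and "a \<le> b"
  then obtain m where "m \<in> M" and "inf m c \<le> a"
    by blast
  with order_trans[OF _ \<open>a \<le> b\<close>] show "b \<in> {z. \<exists>m\<in>M. inf m c \<le> z}"
    by blast
next
  fix a b
  assume "a \<in> {z. \<exists>m\<in>M. inf m c \<le> z}" and "b \<in> {z. \<exists>m\<in>M. inf m c \<le> z}"
  then obtain m m' where "m \<in> M" "m' \<in> M" "inf m c \<le> a" "inf m' c \<le> b"
    by auto
  have "inf (inf m m') c \<le> inf a b"
  proof (rule le_infI)
    show "inf (inf m m') c \<le> a"
      using order_trans[OF inf_mono[OF inf_le1 order_refl] \<open>inf m c \<le> a\<close>] .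
    show "inf (inf m m') c \<le> b"
      using order_trans[OF inf_mono[OF inf_le2 order_refl] \<open>inf m' c \<le> b\<close>] .
  qed
  moreover have "inf m m' \<in> M"
    using assms \<open>m \<in> M\<close> \<open>m' \<in> M\<close> by (simp add: lattice_filter_def)
  ultimately show "inf a b \<in> {z. \<exists>m\<in>M. inf m c \<le> z}"
    by blast
qed

lemma lattice_filter_Union_chain:
  assumes "\<forall>F\<in>C. lattice_filter F" and "subset.chain X C"
  shows "lattice_filter (\<Union>C)"
  unfolding lattice_filter_def
proof (intro conjI allI impI)
  fix a b assume "a \<in> \<Union>C" "a \<le> b"
  then show "b \<in> \<Union>C"
    using assms(1) lattice_filter_up by blast
next
  fix a b assume "a \<in> \<Union>C" "b \<in> \<Union>C"
  then obtain F G where "F \<in> C" "G \<in> C" "a \<in> F" "b \<in> G"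
    by auto
  moreover have "F \<subseteq> G \<or> G \<subseteq> F"
    using assms(2) \<open>F \<in> C\<close> \<open>G \<in> C\<close> by (auto simp: subset_chain_def)
  ultimately have "a \<in> F \<and> b \<in> F \<or> a \<in> G \<and> b \<in> G"
    by blast
  then show "inf a b \<in> \<Union>C"
    using assms(1) \<open>F \<in> C\<close> \<open>G \<in> C\<close> lattice_filter_inf by blast
qed

lemma lattice_filter_maximal_disjoint_imp_prime:
  fixes M J :: "'a::{distrib_lattice,bounded_lattice} set"
  assumes M: "lattice_filter M" "top \<in> M" "M \<inter> J = {}"
    and J: "bot \<in> J" "\<And>a b. a \<in> J \<Longrightarrow> b \<in> J \<Longrightarrow> sup a b \<in> J"
    and max: "\<And>F. lattice_filter F \<Longrightarrow> M \<subseteq> F \<Longrightarrow> F \<inter> J = {} \<Longrightarrow> F = M"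
  shows "prime_filter M"
proof -
  have meets: "\<exists>m\<in>M. \<exists>j\<in>J. inf m c \<le> j" if "c \<notin> M" for c
  proof (rule ccontr)
    define F where "F = {z. \<exists>m\<in>M. inf m c \<le> z}"
    assume "\<not> (\<exists>m\<in>M. \<exists>j\<in>J. inf m c \<le> j)"
    then have "F \<inter> J = {}"
      unfolding F_def by blast
    moreover have "lattice_filter F"
      unfolding F_def by (rule lattice_filter_extend[OF M(1)])
    moreover have "M \<subseteq> F"
      unfolding F_def using inf_le1 by blast
    moreover have "c \<in> F"
      unfolding F_def using M(2) inf_le2 by blast
    ultimately show False
      using max \<open>c \<notin> M\<close> by blast
  qed
  have "a \<in> M \<or> b \<in> M" if "sup a b \<in> M" for a b
  proof (rule ccontr)
    assume "\<not> (a \<in> M \<or> b \<in> M)"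
    with meets[of a] meets[of b] obtain m1 j1 m2 j2 where
      "m1 \<in> M" "j1 \<in> J" "inf m1 a \<le> j1" "m2 \<in> M" "j2 \<in> J" "inf m2 b \<le> j2"
      by blast
    have "inf (inf m1 m2) (sup a b) = sup (inf (inf m1 m2) a) (inf (inf m1 m2) b)"
      by (rule inf_sup_distrib1)
    also have "\<dots> \<le> sup j1 j2"
    proof (rule sup_mono)
      show "inf (inf m1 m2) a \<le> j1"
        using order_trans[OF inf_mono[OF inf_le1 order_refl] \<open>inf m1 a \<le> j1\<close>] .
      show "inf (inf m1 m2) b \<le> j2"
        using order_trans[OF inf_mono[OF inf_le2 order_refl] \<open>inf m2 b \<le> j2\<close>] .
    qed
    finally have "sup j1 j2 \<in> M"
      using lattice_filter_inf[OF M(1) lattice_filter_inf[OF M(1) \<open>m1 \<in> M\<close> \<open>m2 \<in> M\<close>] that]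
      by (blast intro: lattice_filter_up[OF M(1)])
    with J(2) \<open>j1 \<in> J\<close> \<open>j2 \<in> J\<close> M(3) show False
      by blast
  qed
  moreover have "bot \<notin> M"
    using M(3) J(1) by blast
  ultimately show ?thesis
    unfolding prime_filter_def using M(2) lattice_filter_up[OF M(1)] lattice_filter_inf[OF M(1)]
    by blast
qed

lemma prime_filter_separation:
  fixes e :: "'a::{distrib_lattice,bounded_lattice}"
  assumes bot: "bot \<in> J" and down: "\<And>a b. a \<in> J \<Longrightarrow> b \<le> a \<Longrightarrow> b \<in> J"
    and sup: "\<And>a b. a \<in> J \<Longrightarrow> b \<in> J \<Longrightarrow> sup a b \<in> J" and "e \<notin> J"
  shows "\<exists>P\<in>Spec. e \<in> P \<and> P \<inter> J = {}"
proof -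
  define S where "S = {F. lattice_filter F \<and> e \<in> F \<and> F \<inter> J = {}}"
  have "lattice_filter {y. e \<le> y}"
    unfolding lattice_filter_def using order_trans[of e] by simp
  moreover have "{y. e \<le> y} \<inter> J = {}"
    using \<open>e \<notin> J\<close> down by blast
  ultimately have "{y. e \<le> y} \<in> S"
    by (simp add: S_def)
  moreover have "\<Union>C \<in> S" if "C \<noteq> {}" and "subset.chain S C" for C
  proof -
    have "C \<subseteq> S"
      using that(2) by (simp add: subset_chain_def)
    then have "\<forall>F\<in>C. lattice_filter F \<and> e \<in> F \<and> F \<inter> J = {}"
      unfolding S_def by blast
    then have "lattice_filter (\<Union>C)" "e \<in> \<Union>C" "\<Union>C \<inter> J = {}"
      using lattice_filter_Union_chain[OF _ that(2)] \<open>C \<noteq> {}\<close> by blast+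
    then show ?thesis
      by (simp add: S_def)
  qed
  ultimately obtain M where "M \<in> S" and max: "\<And>F. F \<in> S \<Longrightarrow> M \<subseteq> F \<Longrightarrow> F = M"
    using subset_Zorn_nonempty[of S] by blast
  have M: "lattice_filter M" "e \<in> M" "M \<inter> J = {}"
    using \<open>M \<in> S\<close> by (simp_all add: S_def)
  have "prime_filter M"
  proof (rule lattice_filter_maximal_disjoint_imp_prime[OF M(1) _ M(3) bot])
    show "top \<in> M"
      using lattice_filter_up[OF M(1,2) top_greatest] .
    show "sup a b \<in> J" if "a \<in> J" and "b \<in> J" for a b
      using that by (rule sup)
    show "F = M" if "lattice_filter F" and "M \<subseteq> F" and "F \<inter> J = {}" for F
      using that M(2) max by (auto simp: S_def)
  qed
  then have "M \<in> Spec"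
    by (simp add: Spec_def)
  with M show ?thesis
    by blast
qed

lemma Spec_avoidance:
  assumes "finite Q" and "Q \<subseteq> Spec" and "p \<in> Spec" and "\<forall>q\<in>Q. \<not> p \<subseteq> q"
  shows "\<exists>x\<in>p. \<forall>q\<in>Q. x \<notin> q"
  using assms
proof (induction Q rule: finite_induct)
  case empty
  then show ?case
    using Spec_top by blast
next
  case (insert q Q)
  then obtain x where x: "x \<in> p" "\<forall>q\<in>Q. x \<notin> q"
    by auto
  from insert.prems obtain c where c: "c \<in> p" "c \<notin> q"
    by auto
  have "inf x c \<notin> q'" if "q' \<in> insert q Q" for q'
  proof
    assume "inf x c \<in> q'"
    moreover have "q' \<in> Spec"
      using that insert.prems(1) by blast
    ultimately have "x \<in> q'" and "c \<in> q'"
      using Spec_up inf_le1 inf_le2 by (metis, metis)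
    with that x c show False
      by blast
  qed
  moreover have "inf x c \<in> p"
    using Spec_inf[OF insert.prems(2) x(1) c(1)] .
  ultimately show ?case
    by blast
qed

lemma Spec_separation:
  assumes "finite W" and "W \<subseteq> Spec" and "finite Q" and "Q \<subseteq> Spec"
    and "\<forall>w\<in>W. \<forall>q\<in>Q. \<not> w \<subseteq> q"
  shows "\<exists>m. (\<forall>w\<in>W. m \<in> w) \<and> (\<forall>q\<in>Q. m \<notin> q)"
  using assms
proof (induction W rule: finite_induct)
  case empty
  then show ?case
    using Spec_bot by blast
next
  case (insert w W)
  then obtain m where m: "\<forall>w\<in>W. m \<in> w" "\<forall>q\<in>Q. m \<notin> q"
    by auto
  from insert.prems Spec_avoidance[of Q w] obtain x where x: "x \<in> w" "\<forall>q\<in>Q. x \<notin> q"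
    by auto
  have "sup m x \<in> w'" if "w' \<in> insert w W" for w'
  proof -
    have "w' \<in> Spec"
      using that insert.prems(1) by blast
    moreover have "m \<in> w' \<or> x \<in> w'"
      using that m x by auto
    ultimately show ?thesis
      by (simp add: Spec_sup_iff)
  qed
  moreover have "sup m x \<notin> q" if "q \<in> Q" for q
  proof -
    have "q \<in> Spec"
      using that insert.prems(3) by blast
    with that m x show ?thesis
      by (simp add: Spec_sup_iff)
  qed
  ultimately show ?case
    by blast
qed

section \<open>Height and codimension\<close>

lemma enat_le_height_iff: "enat n \<le> height p \<longleftrightarrow> rank_ge (\<lambda>q p. q \<subset> p) Spec p n"
  unfolding height_def by (rule enat_le_rank_iff)

lemma height_step: "q \<in> Spec \<Longrightarrow> q \<subset> p \<Longrightarrow> eSuc (height q) \<le> height p"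
  unfolding height_def by (rule rank_step)

lemma height_mono: "q \<in> Spec \<Longrightarrow> q \<subseteq> p \<Longrightarrow> height q \<le> height p"
proof (cases "q = p")
  case False
  assume "q \<in> Spec" and "q \<subseteq> p"
  with False have "eSuc (height q) \<le> height p"
    by (intro height_step) auto
  then show ?thesis
    by (rule order_trans[OF ile_eSuc])
qed simp

lemma height_less: "q \<in> Spec \<Longrightarrow> q \<subset> p \<Longrightarrow> height p \<noteq> \<infinity> \<Longrightarrow> height q < height p"
  using height_step[of q p] by (cases "height q") (auto simp: eSuc_enat)

lemma height_descend:
  "r \<in> Spec \<Longrightarrow> height r = enat m \<Longrightarrow> k \<le> m \<Longrightarrow> \<exists>z\<in>Spec. z \<subseteq> r \<and> height z = enat k"
proof (induction m arbitrary: r)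
  case (Suc m)
  show ?case
  proof (cases "k = Suc m")
    case False
    from Suc.prems(2) obtain y where y: "y \<in> Spec" "y \<subset> r" "enat m \<le> height y"
      using enat_le_height_iff[of "Suc m" r] enat_le_height_iff[of m] by auto
    with height_less[OF y(1,2)] Suc.prems(2) have "height y = enat m"
      by (cases "height y") auto
    with Suc.IH[OF y(1)] y(2) False Suc.prems(3) show ?thesis
      by fastforce
  qed (use Suc.prems in auto)
qed auto

lemma codim_le_height: "p \<in> Spec \<Longrightarrow> a \<in> p \<Longrightarrow> codim a \<le> height p"
  unfolding codim_def by (rule Inf_lower) auto

lemma le_codim_iff: "k \<le> codim a \<longleftrightarrow> (\<forall>p\<in>Spec. a \<in> p \<longrightarrow> k \<le> height p)"
  unfolding codim_def by (auto simp: le_Inf_iff)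

lemma codim_attained:
  assumes "codim a \<noteq> \<infinity>"
  shows "\<exists>p\<in>Spec. a \<in> p \<and> height p = codim a"
proof -
  let ?S = "{height p | p. p \<in> Spec \<and> a \<in> p}"
  have "?S \<noteq> {}"
  proof
    assume empty: "?S = {}"
    have "codim a = Inf ?S"
      by (simp only: codim_def)
    also have "\<dots> = \<infinity>"
      by (simp only: empty Inf_empty top_enat_def)
    finally show False
      using assms by simp
  qed
  then have "Inf ?S \<in> ?S"
    unfolding Inf_enat_def using LeastI_ex[of "\<lambda>x. x \<in> ?S"] by auto
  then show ?thesis
    unfolding codim_def by auto
qed

lemma codim_antimono: "a \<le> b \<Longrightarrow> codim b \<le> codim a"
  unfolding le_codim_iff[of "codim b"]
  using Spec_up codim_le_height by metis

lemma codim_bot: "codim bot = \<infinity>"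
  unfolding codim_def using Spec_bot by (auto simp: Inf_enat_def)

lemma codim_join_irred:
  assumes "join_irred x"
  shows "codim x = height {y. x \<le> y}"
proof (rule order_antisym)
  have P: "{y. x \<le> y} \<in> Spec"
    using assms by (simp add: principal_filter_in_Spec_iff)
  then show "codim x \<le> height {y. x \<le> y}"
    by (rule codim_le_height) simp
  show "height {y. x \<le> y} \<le> codim x"
    unfolding le_codim_iff
  proof (intro ballI impI)
    fix p assume "p \<in> Spec" and "x \<in> p"
    then have "{y. x \<le> y} \<subseteq> p"
      using Spec_up by blast
    then show "height {y. x \<le> y} \<le> height p"
      by (rule height_mono[OF P])
  qed
qed

lemma mem_dL_iff: "a \<in> dL k \<longleftrightarrow> enat k \<le> codim a"
  by (simp add: dL_def)

lemma dL_down: "a \<in> dL k \<Longrightarrow> b \<le> a \<Longrightarrow> b \<in> dL k"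
  unfolding mem_dL_iff by (erule order_trans[OF _ codim_antimono])

lemma bot_in_dL: "bot \<in> dL k"
  by (simp add: mem_dL_iff codim_bot)

lemma sup_in_dL: "a \<in> dL k \<Longrightarrow> b \<in> dL k \<Longrightarrow> sup a b \<in> dL k"
  by (auto simp: mem_dL_iff le_codim_iff Spec_sup_iff)

lemma dL_antimono: "k \<le> k' \<Longrightarrow> dL k' \<subseteq> dL k"
  by (simp add: dL_def subset_eq) (meson enat_ord_simps(1) order_trans)

lemma qrel_dL_iff: "(a, b) \<in> qrel (dL k) \<longleftrightarrow> cominus a b \<in> dL k \<and> cominus b a \<in> dL k"
  unfolding qrel_def using dL_down[OF _ sup_ge1] dL_down[OF _ sup_ge2] sup_in_dL by blast

lemma join_irred_le_sup_dL:
  assumes "join_irred x" and "codim x \<le> enat d" and "m \<in> dL (Suc d)" and "x \<le> sup t m"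
  shows "x \<le> t"
proof -
  have "\<not> x \<le> m"
  proof
    assume "x \<le> m"
    then have "enat (Suc d) \<le> codim x"
      using dL_down[OF assms(3)] by (simp add: mem_dL_iff)
    from order_trans[OF this assms(2)] show False
      by simp
  qed
  with assms(1,4) show ?thesis
    unfolding join_irred_def by blast
qed

section \<open>The co-Heyting difference\<close>

locale co_heyting_algebra =
  fixes T :: "'a::{distrib_lattice,bounded_lattice} itself"
  assumes co_heyting: "co_heyting T"
begin

lemma cominus_le_iff: "cominus a b \<le> c \<longleftrightarrow> (a::'a) \<le> sup b c"
proof -
  obtain c0 :: 'a where c0: "a \<le> sup b c0" "\<forall>c'. a \<le> sup b c' \<longrightarrow> c0 \<le> c'"
    using co_heyting unfolding co_heyting_def by blast
  then have "\<exists>!c. a \<le> sup b c \<and> (\<forall>c'. a \<le> sup b c' \<longrightarrow> c \<le> c')"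
    by (metis order_antisym)
  then have "a \<le> sup b (cominus a b) \<and> (\<forall>c'. a \<le> sup b c' \<longrightarrow> cominus a b \<le> c')"
    unfolding cominus_def by (rule theI')
  then show ?thesis
    by (meson order_trans sup_mono order_refl)
qed

lemma le_sup_cominus: "(a::'a) \<le> sup b (cominus a b)"
  by (simp flip: cominus_le_iff)

lemma cominus_le: "cominus a b \<le> (a::'a)"
  by (simp add: cominus_le_iff)

lemma cominus_eq_bot_iff: "cominus a b = bot \<longleftrightarrow> (a::'a) \<le> b"
  by (metis bot.extremum_unique cominus_le_iff sup_bot_right)

lemma cominus_mono: "a \<le> a' \<Longrightarrow> cominus a b \<le> cominus (a'::'a) b"
  by (meson le_sup_cominus cominus_le_iff order_trans)

lemma cominus_antimono:
  assumes "b \<le> b'"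
  shows "cominus a b' \<le> cominus (a::'a) b"
proof -
  have "a \<le> sup b (cominus a b)"
    by (rule le_sup_cominus)
  also have "\<dots> \<le> sup b' (cominus a b)"
    using assms by (rule sup_mono) simp
  finally show ?thesis
    by (simp add: cominus_le_iff)
qed

lemma cominus_triangle: "cominus a c \<le> sup (cominus a b) (cominus (b::'a) c)"
proof -
  have "a \<le> sup b (cominus a b)"
    by (rule le_sup_cominus)
  also have "\<dots> \<le> sup (sup c (cominus b c)) (cominus a b)"
    by (rule sup_mono[OF le_sup_cominus order_refl])
  also have "\<dots> = sup c (sup (cominus a b) (cominus b c))"
    by (simp add: ac_simps)
  finally show ?thesis
    by (simp add: cominus_le_iff)
qed

lemma cominus_sup_left: "cominus (sup a b) b = cominus (a::'a) b"
proof (rule order_antisym)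
  show "cominus (sup a b) b \<le> cominus a b"
    by (simp add: cominus_le_iff le_sup_cominus)
  show "cominus a b \<le> cominus (sup a b) b"
    by (rule cominus_mono) simp
qed

lemma cominus_le_of_le_sup:
  assumes "cominus a w \<le> sup v w"
  shows "cominus (a::'a) w \<le> v"
proof -
  have "a \<le> sup w (sup v w)"
    using le_sup_cominus[of a w] assms by (meson order_trans sup_mono order_refl)
  then show ?thesis
    by (simp add: cominus_le_iff ac_simps)
qed

text \<open>The ideal \<open>J\<close> below contains \<open>w\<close> and the complement of \<open>r\<close>, and it misses \<open>a - w\<close>
  because \<open>a - w \<le> v \<squnion> w\<close> already forces \<open>a - w \<le> v\<close>.\<close>

lemma Spec_psubset_containing_cominus:
  assumes r: "r \<in> Spec" and "cominus a w \<in> r" and "(w::'a) \<in> r"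
  shows "\<exists>P\<in>Spec. P \<subset> r \<and> cominus a w \<in> P"
proof -
  define J where "J = {z. \<exists>v. v \<notin> r \<and> z \<le> sup v w}"
  have "\<exists>P\<in>Spec. cominus a w \<in> P \<and> P \<inter> J = {}"
  proof (rule prime_filter_separation)
    show "bot \<in> J"
      unfolding J_def using Spec_bot[OF r] by auto
    show "b \<in> J" if "z \<in> J" and "b \<le> z" for z b
    proof -
      from that(1) obtain v where "v \<notin> r" and "z \<le> sup v w"
        unfolding J_def by blast
      with order_trans[OF that(2)] show ?thesis
        unfolding J_def by blast
    qed
    show "sup z z' \<in> J" if "z \<in> J" and "z' \<in> J" for z z'
    proof -
      from that obtain v v' where "v \<notin> r" "z \<le> sup v w" "v' \<notin> r" "z' \<le> sup v' w"
        unfolding J_def by blast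
      have "z \<le> sup (sup v v') w"
        using \<open>z \<le> sup v w\<close> by (rule order_trans) (simp add: le_supI1)
      moreover have "z' \<le> sup (sup v v') w"
        using \<open>z' \<le> sup v' w\<close> by (rule order_trans) (simp add: le_supI1)
      ultimately have "sup z z' \<le> sup (sup v v') w"
        by (rule le_supI)
      moreover have "sup v v' \<notin> r"
        using \<open>v \<notin> r\<close> \<open>v' \<notin> r\<close> by (simp add: Spec_sup_iff[OF r])
      ultimately show ?thesis
        unfolding J_def by blast
    qed
    show "cominus a w \<notin> J"
    proof
      assume "cominus a w \<in> J"
      then obtain v where "v \<notin> r" and "cominus a w \<le> sup v w"
        unfolding J_def by blast
      with Spec_up[OF r \<open>cominus a w \<in> r\<close> cominus_le_of_le_sup] show False
        by blast
    qed
  qed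
  then obtain P where P: "P \<in> Spec" "cominus a w \<in> P" "P \<inter> J = {}"
    by blast
  have "P \<subseteq> r"
    using P(3) sup_ge1 unfolding J_def by blast
  moreover have "w \<in> J"
    unfolding J_def using Spec_bot[OF r] by auto
  ultimately show ?thesis
    using P \<open>w \<in> r\<close> by blast
qed

lemma Spec_realising_codim_cominus:
  assumes fin: "codim (cominus a w) \<noteq> \<infinity>"
  shows "\<exists>r\<in>Spec. cominus a w \<in> r \<and> (w::'a) \<notin> r \<and> height r = codim (cominus a w)"
proof -
  obtain r where r: "r \<in> Spec" "cominus a w \<in> r" "height r = codim (cominus a w)"
    using codim_attained[OF fin] by blast
  have "w \<notin> r"
  proof
    assume "w \<in> r"
    then obtain P where "P \<in> Spec" "P \<subset> r" "cominus a w \<in> P"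
      using Spec_psubset_containing_cominus[OF r(1,2)] by blast
    then have "height P < codim (cominus a w)"
      using height_less r(3) fin by metis
    with codim_le_height[OF \<open>P \<in> Spec\<close> \<open>cominus a w \<in> P\<close>] show False
      by simp
  qed
  with r show ?thesis
    by blast
qed

lemma cominus_in_dL_trans:
  "cominus a b \<in> dL k \<Longrightarrow> cominus b c \<in> dL k \<Longrightarrow> cominus (a::'a) c \<in> dL k"
  by (rule dL_down[OF sup_in_dL cominus_triangle])

lemma qrel_dL_refl: "(a, a) \<in> qrel (dL k :: 'a set)"
  by (simp add: qrel_dL_iff cominus_eq_bot_iff[THEN iffD2] bot_in_dL)

lemma qrel_dL_trans:
  "(a, b) \<in> qrel (dL k) \<Longrightarrow> (b, c) \<in> qrel (dL k) \<Longrightarrow> (a, c) \<in> qrel (dL k :: 'a set)"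
  by (meson qrel_dL_iff cominus_in_dL_trans)

lemma equiv_qrel_dL: "equiv UNIV (qrel (dL k :: 'a set))"
proof (rule equivI)
  show "qrel (dL k :: 'a set) \<subseteq> UNIV \<times> UNIV"
    by simp
  show "refl (qrel (dL k :: 'a set))"
    by (simp add: refl_on_def qrel_dL_refl)
  show "sym (qrel (dL k :: 'a set))"
    by (rule symI) (simp add: qrel_dL_iff)
  show "trans (qrel (dL k :: 'a set))"
    by (rule transI) (rule qrel_dL_trans)
qed

lemma quot_le_dL_iff:
  fixes X Y :: "'a set"
  shows "quot_le (dL k) X Y \<longleftrightarrow> (\<exists>b\<in>X. \<exists>c\<in>Y. cominus b c \<in> dL k)"
  unfolding quot_le_def qrel_dL_iff cominus_sup_left
  by (simp add: cominus_eq_bot_iff[THEN iffD2] bot_in_dL)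

lemma quot_le_dL_iff_members:
  fixes X Y :: "'a set"
  assumes "X \<in> quot (dL k)" and "Y \<in> quot (dL k)" and "b \<in> X" and "c \<in> Y"
  shows "quot_le (dL k) X Y \<longleftrightarrow> cominus b c \<in> dL k"
proof
  assume "quot_le (dL k) X Y"
  then obtain b' c' where "b' \<in> X" "c' \<in> Y" "cominus b' c' \<in> dL k"
    by (auto simp: quot_le_dL_iff)
  moreover have "(b, b') \<in> qrel (dL k)" "(c', c) \<in> qrel (dL k)"
    using assms \<open>b' \<in> X\<close> \<open>c' \<in> Y\<close> in_quotient_imp_in_rel[OF equiv_qrel_dL]
    unfolding quot_def by blast+
  ultimately show "cominus b c \<in> dL k"
    unfolding qrel_dL_iff by (meson cominus_in_dL_trans)
next
  assume "cominus b c \<in> dL k"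
  with assms(3,4) show "quot_le (dL k) X Y"
    by (auto simp: quot_le_dL_iff)
qed

end

section \<open>Precompact Hausdorff co-Heyting algebras\<close>

locale precompact_hausdorff_co_heyting = co_heyting_algebra +
  assumes hausdorff: "hausdorff T" and precompact: "precompact T"
begin

lemma codim_finite: "(a::'a) \<noteq> bot \<Longrightarrow> codim a \<noteq> \<infinity>"
  using hausdorff unfolding hausdorff_def by blast

lemma join_irred_codim_finite: "join_irred (x::'a) \<Longrightarrow> codim x \<noteq> \<infinity>"
  by (simp add: codim_finite join_irred_def)

lemma finite_quot_dL: "finite (quot (dL (Suc n) :: 'a set))"
  using precompact unfolding precompact_def by simp

lemma Spec_height_le_saturated:
  assumes p: "p \<in> Spec" "height p \<le> enat n" and "a \<in> p" and "(a, b) \<in> qrel (dL (Suc n))"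
  shows "(b::'a) \<in> p"
proof -
  have "cominus a b \<in> dL (Suc n)"
    using assms(4) by (simp add: qrel_dL_iff)
  have "cominus a b \<notin> p"
  proof
    assume "cominus a b \<in> p"
    with \<open>cominus a b \<in> dL (Suc n)\<close> p(1) have "enat (Suc n) \<le> height p"
      by (simp add: mem_dL_iff le_codim_iff)
    from order_trans[OF this p(2)] show False
      by simp
  qed
  moreover have "sup b (cominus a b) \<in> p"
    using Spec_up[OF p(1) \<open>a \<in> p\<close> le_sup_cominus] .
  ultimately show ?thesis
    by (simp add: Spec_sup_iff[OF p(1)])
qed

text \<open>Below height \<open>n\<close>, a prime filter is a union of classes modulo \<open>dL (n + 1)\<close>, of which
  there are finitely many.\<close>

lemma finite_Spec_height_le: "finite {p \<in> (Spec::'a set set). height p \<le> enat n}"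
proof -
  let ?S = "{p \<in> (Spec::'a set set). height p \<le> enat n}"
  let ?Q = "quot (dL (Suc n) :: 'a set)"
  have union: "p = \<Union>{X \<in> ?Q. X \<subseteq> p}" if "p \<in> ?S" for p
  proof
    show "p \<subseteq> \<Union>{X \<in> ?Q. X \<subseteq> p}"
    proof
      fix a assume "a \<in> p"
      have "qrel (dL (Suc n)) `` {a} \<subseteq> p"
        using that Spec_height_le_saturated[of p n a] \<open>a \<in> p\<close> by blast
      moreover have "qrel (dL (Suc n)) `` {a} \<in> ?Q" "a \<in> qrel (dL (Suc n)) `` {a}"
        unfolding quot_def by (simp_all add: quotientI qrel_dL_refl)
      ultimately show "a \<in> \<Union>{X \<in> ?Q. X \<subseteq> p}"
        by blast
    qed
  qed blast
  have "inj_on (\<lambda>p. {X \<in> ?Q. X \<subseteq> p}) ?S"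
    by (rule inj_onI) (metis union)
  moreover have "(\<lambda>p. {X \<in> ?Q. X \<subseteq> p}) ` ?S \<subseteq> Pow ?Q"
    by blast
  then have "finite ((\<lambda>p. {X \<in> ?Q. X \<subseteq> p}) ` ?S)"
    using finite_quot_dL by (meson finite_Pow_iff finite_subset)
  ultimately show ?thesis
    by (rule finite_imageD[rotated])
qed

lemma Spec_height_avoiding:
  assumes "enat k \<le> codim a" and "\<not> a \<le> w"
  shows "\<exists>z\<in>Spec. (w::'a) \<notin> z \<and> height z = enat k"
proof -
  have fin: "codim (cominus a w) \<noteq> \<infinity>"
    using assms(2) codim_finite by (simp add: cominus_eq_bot_iff)
  then obtain r where r: "r \<in> Spec" "cominus a w \<in> r" "w \<notin> r"
    and "height r = codim (cominus a w)"
    using Spec_realising_codim_cominus by blast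
  then obtain m where m: "height r = enat m"
    using fin by (cases "height r") auto
  have "a \<in> r"
    using Spec_up[OF r(1,2) cominus_le] .
  then have "enat k \<le> enat m"
    using order_trans[OF assms(1) codim_le_height[OF r(1)]] m by simp
  then obtain z where "z \<in> Spec" "z \<subseteq> r" "height z = enat k"
    using height_descend[OF r(1) m] by auto
  with r(3) show ?thesis
    by blast
qed

lemma dL_principal: "\<exists>M::'a. dL k = {b. b \<le> M}"
proof -
  define W where "W = {w \<in> (Spec::'a set set). height w = enat k}"
  define Q where "Q = {q \<in> (Spec::'a set set). height q < enat k}"
  have "finite W"
    by (rule finite_subset[OF _ finite_Spec_height_le[of k]]) (auto simp: W_def)
  have "finite Q"
    by (rule finite_subset[OF _ finite_Spec_height_le[of k]]) (auto simp: Q_def less_imp_le)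
  have "\<forall>w\<in>W. \<forall>q\<in>Q. \<not> w \<subseteq> q"
  proof (intro ballI notI)
    fix w q assume "w \<in> W" "q \<in> Q" "w \<subseteq> q"
    then have "height w \<le> height q"
      by (intro height_mono) (simp_all add: W_def)
    with \<open>w \<in> W\<close> \<open>q \<in> Q\<close> show False
      by (auto simp: W_def Q_def not_le[symmetric])
  qed
  then obtain M where M: "\<forall>w\<in>W. M \<in> w" "\<forall>q\<in>Q. M \<notin> q"
    using Spec_separation[OF \<open>finite W\<close> _ \<open>finite Q\<close>] unfolding W_def Q_def by blast
  have "enat k \<le> codim M"
    unfolding le_codim_iff using M(2) by (auto simp: Q_def not_less)
  moreover have "b \<le> M" if "enat k \<le> codim b" for b
  proof (rule ccontr)
    assume "\<not> b \<le> M"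
    with Spec_height_avoiding[OF that] obtain z where "z \<in> Spec" "M \<notin> z" "height z = enat k"
      by blast
    with M(1) show False
      unfolding W_def by blast
  qed
  ultimately have "dL k = {b. b \<le> M}"
    using dL_down[of M k] by (auto simp: mem_dL_iff)
  then show ?thesis ..
qed

lemma Spec_height_isolating_elements:
  assumes p: "p \<in> Spec" and hp: "height p = enat n"
  obtains x C :: 'a
  where "x \<in> p" and "enat n \<le> codim x"
    and "C \<notin> p" and "\<And>z. z \<in> Spec \<Longrightarrow> height z = enat n \<Longrightarrow> z \<noteq> p \<Longrightarrow> C \<in> z"
proof -
  define Q where "Q = {q \<in> (Spec::'a set set). height q < enat n}"
  define Z where "Z = {z \<in> (Spec::'a set set). height z = enat n \<and> z \<noteq> p}"
  have "finite Q"
    by (rule finite_subset[OF _ finite_Spec_height_le[of n]]) (auto simp: Q_def less_imp_le)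
  have "finite Z"
    by (rule finite_subset[OF _ finite_Spec_height_le[of n]]) (auto simp: Z_def)
  have "\<forall>q\<in>Q. \<not> p \<subseteq> q"
    unfolding Q_def using height_mono[OF p] hp by (metis (no_types, lifting) leD mem_Collect_eq)
  then obtain x where x: "x \<in> p" "\<forall>q\<in>Q. x \<notin> q"
    using Spec_avoidance[OF \<open>finite Q\<close> _ p] unfolding Q_def by blast
  have "enat n \<le> codim x"
    unfolding le_codim_iff using x(2) by (auto simp: Q_def not_less)
  have "\<forall>z\<in>Z. \<forall>q\<in>{p}. \<not> z \<subseteq> q"
  proof (intro ballI notI)
    fix z q assume "z \<in> Z" "q \<in> {p}" "z \<subseteq> q"
    then have "z \<in> Spec" "z \<subset> p" "height z = enat n"
      by (auto simp: Z_def)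
    with height_less[of z p] hp show False
      by fastforce
  qed
  moreover have "Z \<subseteq> Spec"
    by (auto simp: Z_def)
  ultimately obtain C where "\<forall>z\<in>Z. C \<in> z" "C \<notin> p"
    using Spec_separation[of Z "{p}"] \<open>finite Z\<close> p by auto
  with x(1) \<open>enat n \<le> codim x\<close> show ?thesis
    using that unfolding Z_def by blast
qed

text \<open>The generator is \<open>x - C\<close>: a prime filter witnessing \<open>x - C \<not>\<le> b\<close> for some \<open>b \<in> p\<close>
  can be taken of the same height as \<open>p\<close>, so it is \<open>p\<close> itself or contains \<open>C\<close>.\<close>

lemma Spec_principal:
  assumes p: "p \<in> Spec" and fin: "height p \<noteq> \<infinity>"
  shows "\<exists>g::'a. p = {y. g \<le> y}"
proof -
  obtain n where hp: "height p = enat n"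
    using fin by (cases "height p") auto
  obtain x C :: 'a where x: "x \<in> p" "enat n \<le> codim x" and C: "C \<notin> p"
    and C_in: "\<And>z. z \<in> Spec \<Longrightarrow> height z = enat n \<Longrightarrow> z \<noteq> p \<Longrightarrow> C \<in> z"
    using Spec_height_isolating_elements[OF p hp] by blast
  have below: "cominus x C \<le> b" if "b \<in> p" for b
  proof (rule ccontr)
    assume "\<not> cominus x C \<le> b"
    then have "\<not> x \<le> sup C b"
      by (simp add: cominus_le_iff)
    with Spec_height_avoiding[OF x(2)] obtain z
      where z: "z \<in> Spec" "sup C b \<notin> z" "height z = enat n"
      by blast
    then have "C \<notin> z" and "b \<notin> z"
      by (simp_all add: Spec_sup_iff[OF z(1)])
    with C_in z(1,3) that show False
      by (cases "z = p") auto
  qed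
  have "sup C (cominus x C) \<in> p"
    using Spec_up[OF p x(1) le_sup_cominus] .
  then have "cominus x C \<in> p"
    using C by (simp add: Spec_sup_iff[OF p])
  have "p = {y. cominus x C \<le> y}"
  proof
    show "p \<subseteq> {y. cominus x C \<le> y}"
      using below by blast
    show "{y. cominus x C \<le> y} \<subseteq> p"
      using Spec_up[OF p \<open>cominus x C \<in> p\<close>] by blast
  qed
  then show ?thesis ..
qed

lemma Spec_below_principal:
  assumes "join_irred (x::'a)" and "q \<in> Spec" and "q \<subset> {y. x \<le> y}"
  shows "\<exists>g. join_irred g \<and> q = {y. g \<le> y}"
proof -
  have "height q < codim x"
    using height_less[OF assms(2,3)] join_irred_codim_finite[OF assms(1)]
    by (simp add: codim_join_irred[OF assms(1)])
  then obtain g where "q = {y. g \<le> y}"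
    using Spec_principal[OF assms(2)] by fastforce
  with assms(2) show ?thesis
    by (auto simp: principal_filter_in_Spec_iff)
qed

lemma finite_join_irred_codim_le: "finite {x::'a. join_irred x \<and> codim x \<le> enat d}"
proof -
  let ?G = "{x::'a. join_irred x \<and> codim x \<le> enat d}"
  have "(\<lambda>x. {y. x \<le> y}) ` ?G \<subseteq> {p \<in> Spec. height p \<le> enat d}"
    by (auto simp: principal_filter_in_Spec_iff codim_join_irred)
  then have "finite ((\<lambda>x. {y. x \<le> y}) ` ?G)"
    by (rule finite_subset[OF _ finite_Spec_height_le])
  moreover have "inj_on (\<lambda>x. {y. x \<le> y}) ?G"
    by (rule inj_onI) (metis mem_Collect_eq order_antisym order_refl)
  ultimately show ?thesis
    by (rule finite_imageD)
qed


lemma finite_cover_mod_dL: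
  assumes M: "dL (Suc n) = {b. b \<le> M}"
  shows "\<exists>A0\<subseteq>A. finite A0 \<and> (\<forall>a\<in>A. \<exists>a0\<in>A0. (a::'a) \<le> sup a0 M)"
proof -
  let ?cls = "\<lambda>a::'a. qrel (dL (Suc n)) `` {a}"
  have "?cls ` A \<subseteq> quot (dL (Suc n))"
    unfolding quot_def by (auto intro: quotientI)
  then have "finite (?cls ` A)"
    by (rule finite_subset[OF _ finite_quot_dL])
  then have "\<exists>A0\<subseteq>A. finite A0 \<and> ?cls ` A = ?cls ` A0"
    by (rule finite_subset_image[OF _ subset_refl])
  then obtain A0 where A0: "A0 \<subseteq> A" "finite A0" "?cls ` A = ?cls ` A0"
    by (elim exE conjE)
  have "\<exists>a0\<in>A0. a \<le> sup a0 M" if "a \<in> A" for a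
  proof -
    have "?cls a \<in> ?cls ` A0"
      using A0(3) \<open>a \<in> A\<close> by (metis imageI)
    then obtain a0 where "a0 \<in> A0" and "?cls a = ?cls a0"
      by (elim imageE)
    then have "(a, a0) \<in> qrel (dL (Suc n))"
      by (simp add: eq_equiv_class_iff[OF equiv_qrel_dL])
    then have "cominus a a0 \<in> dL (Suc n)"
      by (simp add: qrel_dL_iff)
    then have "cominus a a0 \<le> M"
      using M by simp
    with \<open>a0 \<in> A0\<close> show ?thesis
      by (auto simp: cominus_le_iff)
  qed
  with A0(1,2) show ?thesis
    by blast
qed

lemma join_irred_imp_cji:
  assumes ji: "join_irred (x::'a)"
  shows "x \<in> cji (\<le>) UNIV bot"
proof -
  have "\<exists>a\<in>A. x \<le> a" if lub: "is_lub (\<le>) UNIV A s" and "x \<le> s" for A s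
  proof -
    obtain n where n: "codim x \<le> enat n"
      using join_irred_codim_finite[OF ji] by (cases "codim x") auto
    obtain M :: 'a where M: "dL (Suc n) = {b. b \<le> M}"
      using dL_principal by blast
    obtain A0 where A0: "A0 \<subseteq> A" "finite A0" "\<forall>a\<in>A. \<exists>a0\<in>A0. a \<le> sup a0 M"
      using finite_cover_mod_dL[OF M] by blast
    define t where "t = Sup_fin (insert bot A0)"
    have "a \<le> sup t M" if "a \<in> A" for a
    proof -
      from A0(3) that obtain a0 where "a0 \<in> A0" and "a \<le> sup a0 M"
        by blast
      moreover have "a0 \<le> t"
        unfolding t_def using \<open>a0 \<in> A0\<close> A0(2) by (simp add: Sup_fin.coboundedI)
      ultimately show ?thesis
        using order_trans[OF _ sup_mono[OF _ order_refl]] by blast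
    qed
    then have "s \<le> sup t M"
      using lub unfolding is_lub_def by blast
    with \<open>x \<le> s\<close> have "x \<le> sup t M"
      by (rule order_trans)
    moreover have "M \<in> dL (Suc n)"
      using M by simp
    ultimately have "x \<le> t"
      using join_irred_le_sup_dL[OF ji n] by blast
    then obtain b where "b \<in> insert bot A0" and "x \<le> b"
      using join_irred_le_Sup_fin[OF ji] A0(2) unfolding t_def by blast
    moreover have "\<not> x \<le> bot"
      using ji by (simp add: join_irred_def bot_unique)
    ultimately show ?thesis
      using A0(1) by auto
  qed
  with ji show ?thesis
    unfolding cji_def join_irred_def by blast
qed

lemma cji_iff_join_irred: "x \<in> cji (\<le>) UNIV bot \<longleftrightarrow> join_irred (x::'a)"
  using cji_imp_join_irred join_irred_imp_cji by blast

text \<open>Through \<open>x \<mapsto> {y. x \<le> y}\<close> the completely join irreducible elements, ordered by \<open>>\<close>,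
  correspond to the principal prime filters ordered by inclusion, and these are downward closed
  in \<open>Spec\<close> as long as the height is finite.\<close>

lemma rank_cji_eq_codim:
  assumes "x \<in> cji (\<le>) (UNIV::'a set) bot"
  shows "rank (\<lambda>y x. x < y) (cji (\<le>) UNIV bot) x = codim x"
proof -
  have "rank (\<lambda>y x. x < y) (cji (\<le>) UNIV bot) x = rank (\<lambda>q p. q \<subset> p) Spec {y. x \<le> y}"
  proof (rule sym, rule rank_transfer[where f = "\<lambda>x. {y. x \<le> y}"])
    show "(\<lambda>x. {y. x \<le> y}) ` cji (\<le>) (UNIV::'a set) bot \<subseteq> Spec"
      by (auto simp: cji_iff_join_irred principal_filter_in_Spec_iff)
    show "{y. y' \<le> y} \<subset> {y. x' \<le> y} \<longleftrightarrow> x' < y'"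
      if "x' \<in> cji (\<le>) UNIV bot" and "y' \<in> cji (\<le>) UNIV bot" for x' y' :: 'a
      by (rule principal_filter_psubset_iff)
    show "q \<in> (\<lambda>x. {y. x \<le> y}) ` cji (\<le>) UNIV bot"
      if "x' \<in> cji (\<le>) UNIV bot" and "q \<in> Spec" and "q \<subset> {y. x' \<le> y}" for x' :: 'a and q
      using Spec_below_principal[of x' q] that by (auto simp: cji_iff_join_irred)
  qed (rule assms)
  also have "\<dots> = codim x"
    using assms by (simp add: codim_join_irred height_def cji_iff_join_irred)
  finally show ?thesis .
qed

lemma cji_no_ascending_chain:
  "\<not> (\<exists>f :: nat \<Rightarrow> 'a. (\<forall>n. f n \<in> cji (\<le>) UNIV bot) \<and> (\<forall>n. f n < f (Suc n)))"
proof
  assume "\<exists>f :: nat \<Rightarrow> 'a. (\<forall>n. f n \<in> cji (\<le>) UNIV bot) \<and> (\<forall>n. f n < f (Suc n))"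
  then obtain f :: "nat \<Rightarrow> 'a" where ji: "\<And>n. join_irred (f n)" and mono: "strict_mono f"
    by (auto simp: cji_iff_join_irred strict_mono_Suc_iff)
  obtain d where d: "codim (f 0) = enat d"
    using join_irred_codim_finite[OF ji[of 0]] by (cases "codim (f 0)") auto
  have "codim (f n) \<le> enat d" for n
    using codim_antimono[of "f 0" "f n"] strict_mono_less_eq[OF mono, of 0 n] d by simp
  then have "range f \<subseteq> {x. join_irred x \<and> codim x \<le> enat d}"
    using ji by blast
  then have "finite (range f)"
    by (rule finite_subset[OF _ finite_join_irred_codim_le])
  from finite_imageD[OF this strict_mono_imp_inj_on[OF mono]] show False
    by simp
qed

lemma join_irred_le_component:
  assumes ji: "join_irred (y::'a)" and "y \<le> a"
  shows "\<exists>k\<in>ji_components a. y \<le> k"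
proof -
  obtain d where d: "codim y = enat d"
    using join_irred_codim_finite[OF ji] by (cases "codim y") auto
  let ?C = "{z. join_irred z \<and> y \<le> z \<and> z \<le> a}"
  have "?C \<subseteq> {z. join_irred z \<and> codim z \<le> enat d}"
    using codim_antimono d by fastforce
  then have "finite ?C"
    by (rule finite_subset[OF _ finite_join_irred_codim_le])
  moreover have "y \<in> ?C"
    using ji \<open>y \<le> a\<close> by simp
  ultimately obtain k where k: "k \<in> ?C" and max: "\<forall>z\<in>?C. k \<le> z \<longrightarrow> k = z"
    using finite_has_maximal[of ?C] by blast
  have "k \<in> ji_components a"
    unfolding ji_components_def
  proof (intro CollectI conjI allI impI)
    show "join_irred k" and "k \<le> a"
      using k by simp_all
    fix z assume "join_irred z" and "z \<le> a" and "k \<le> z"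
    moreover have "y \<le> z"
      using k order_trans[OF _ \<open>k \<le> z\<close>] by blast
    ultimately show "z = k"
      using max by auto
  qed
  with k show ?thesis
    by blast
qed

lemma is_lub_ji_components: "is_lub (\<le>) UNIV (ji_components a) (a::'a)"
  unfolding is_lub_def
proof (intro conjI ballI impI)
  show "a \<in> UNIV"
    by simp
  show "k \<le> a" if "k \<in> ji_components a" for k
    using that by (simp add: ji_components_def)
  fix t assume ub: "\<forall>k\<in>ji_components a. k \<le> t"
  show "a \<le> t"
  proof (rule ccontr)
    assume "\<not> a \<le> t"
    then have fin: "codim (cominus a t) \<noteq> \<infinity>"
      using codim_finite by (simp add: cominus_eq_bot_iff)
    then obtain r where r: "r \<in> Spec" "cominus a t \<in> r" "t \<notin> r"
      and "height r = codim (cominus a t)"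
      using Spec_realising_codim_cominus by blast
    with fin obtain y where y: "r = {z. y \<le> z}"
      using Spec_principal by metis
    then have "join_irred y"
      using r(1) by (simp add: principal_filter_in_Spec_iff)
    moreover have "y \<le> a"
      using r(2) y order_trans[OF _ cominus_le] by blast
    ultimately obtain k where "k \<in> ji_components a" and "y \<le> k"
      using join_irred_le_component by blast
    with ub y r(3) order_trans[of y k t] show False
      by blast
  qed
qed

lemma cominus_Sup_join_irreds_in_dL:
  "cominus (a::'a) (Sup_fin (insert bot {y. join_irred y \<and> y \<le> a \<and> codim y \<le> enat d}))
     \<in> dL (Suc d)"
  (is "cominus a (Sup_fin (insert bot ?G)) \<in> _")
proof (rule ccontr)
  define v where "v = Sup_fin (insert bot ?G)"
  have "finite ?G"
    by (rule finite_subset[OF _ finite_join_irred_codim_le[of d]]) blast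
  assume "cominus a (Sup_fin (insert bot ?G)) \<notin> dL (Suc d)"
  then have le: "codim (cominus a v) \<le> enat d"
    by (simp add: v_def mem_dL_iff Suc_ile_eq not_less)
  then have fin: "codim (cominus a v) \<noteq> \<infinity>"
    by (cases "codim (cominus a v)") auto
  then obtain r where r: "r \<in> Spec" "cominus a v \<in> r" "v \<notin> r"
    and hr: "height r = codim (cominus a v)"
    using Spec_realising_codim_cominus by blast
  with fin obtain g where g: "r = {y. g \<le> y}"
    using Spec_principal by metis
  then have "join_irred g"
    using r(1) by (simp add: principal_filter_in_Spec_iff)
  moreover have "g \<le> a"
    using r(2) g order_trans[OF _ cominus_le] by blast
  moreover have "codim g \<le> enat d"
    using codim_join_irred[OF \<open>join_irred g\<close>] g hr le by simp
  ultimately have "g \<le> v"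
    unfolding v_def using \<open>finite ?G\<close> by (simp add: Sup_fin.coboundedI)
  with r(3) g show False
    by simp
qed

subsection \<open>The completion\<close>

lemma hatL_component: "\<xi> \<in> hatL \<Longrightarrow> \<xi> d \<in> quot (dL (Suc d) :: 'a set)"
  unfolding hatL_def by blast

lemma hatL_component_nonempty:
  assumes "\<xi> \<in> hatL"
  shows "\<exists>b. b \<in> (\<xi> d :: 'a set)"
  using in_quotient_imp_non_empty[OF equiv_qrel_dL hatL_component[OF assms, unfolded quot_def]]
  by blast

lemma qrel_of_hatL_component:
  assumes "\<xi> \<in> hatL" and "b \<in> \<xi> d" and "c \<in> \<xi> d"
  shows "(b, c) \<in> qrel (dL (Suc d) :: 'a set)"
  using in_quotient_imp_in_rel[OF equiv_qrel_dL hatL_component[OF assms(1), unfolded quot_def]]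
    assms(2,3)
  by simp

lemma hatL_Suc_subset:
  assumes "\<xi> \<in> hatL"
  shows "\<xi> (Suc d) \<subseteq> (\<xi> d :: 'a set)"
proof
  fix b assume "b \<in> \<xi> (Suc d)"
  then have "b \<in> qrel (dL (Suc d)) `` \<xi> (Suc d)"
    by (rule ImageI[OF qrel_dL_refl])
  moreover have "\<xi> d = qrel (dL (Suc d)) `` \<xi> (Suc d)"
    using assms unfolding hatL_def by blast
  ultimately show "b \<in> \<xi> d"
    by simp
qed

lemma hatL_antimono:
  assumes "\<xi> \<in> hatL" and "d \<le> m"
  shows "\<xi> m \<subseteq> (\<xi> d :: 'a set)"
  using assms(2)
proof (induction rule: dec_induct)
  case (step n)
  then show ?case
    using hatL_Suc_subset[OF assms(1), of n] by blast
qed simp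

lemma mem_hat_emb: "a \<in> hat_emb (a::'a) d"
  by (simp add: hat_emb_def qrel_dL_refl)

lemma hat_emb_in_hatL: "hat_emb (a::'a) \<in> hatL"
  unfolding hatL_def
proof (intro CollectI conjI allI)
  fix d
  show "hat_emb a d \<in> quot (dL (Suc d))"
    unfolding hat_emb_def quot_def by (rule quotientI) simp
  show "hat_emb a d = qrel (dL (Suc d)) `` hat_emb a (Suc d)"
  proof
    show "hat_emb a d \<subseteq> qrel (dL (Suc d)) `` hat_emb a (Suc d)"
      using mem_hat_emb[of a "Suc d"] unfolding hat_emb_def by blast
    show "qrel (dL (Suc d)) `` hat_emb a (Suc d) \<subseteq> hat_emb a d"
    proof
      fix c assume "c \<in> qrel (dL (Suc d)) `` hat_emb a (Suc d)"
      then obtain b where ab: "(a, b) \<in> qrel (dL (Suc (Suc d)))" and "(b, c) \<in> qrel (dL (Suc d))"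
        unfolding hat_emb_def by blast
      from ab have "(a, b) \<in> qrel (dL (Suc d))"
        using dL_antimono[of "Suc d" "Suc (Suc d)"] by (auto simp: qrel_dL_iff)
      from qrel_dL_trans[OF this \<open>(b, c) \<in> qrel (dL (Suc d))\<close>] show "c \<in> hat_emb a d"
        by (simp add: hat_emb_def)
    qed
  qed
qed

lemma hat_le_iff:
  fixes \<xi> \<eta> :: "nat \<Rightarrow> 'a set"
  shows "hat_le \<xi> \<eta> \<longleftrightarrow> (\<forall>d. \<exists>b\<in>\<xi> d. \<exists>c\<in>\<eta> d. cominus b c \<in> dL (Suc d))"
  by (simp add: hat_le_def quot_le_dL_iff)

lemma hat_leD:
  fixes \<xi> \<eta> :: "nat \<Rightarrow> 'a set"
  assumes "\<xi> \<in> hatL" and "\<eta> \<in> hatL" and "hat_le \<xi> \<eta>" and "b \<in> \<xi> d" and "c \<in> \<eta> d"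
  shows "cominus b c \<in> dL (Suc d)"
proof -
  have "quot_le (dL (Suc d)) (\<xi> d) (\<eta> d)"
    using assms(3) by (simp add: hat_le_def)
  then show ?thesis
    using quot_le_dL_iff_members[OF hatL_component[OF assms(1)] hatL_component[OF assms(2)] assms(4,5)]
    by simp
qed

lemma hat_le_refl:
  assumes "\<xi> \<in> hatL"
  shows "hat_le \<xi> (\<xi> :: nat \<Rightarrow> 'a set)"
  unfolding hat_le_iff
proof
  fix d
  obtain b where "b \<in> \<xi> d"
    using hatL_component_nonempty[OF assms] by blast
  moreover have "cominus b b \<in> dL (Suc d)"
    by (simp add: cominus_eq_bot_iff[THEN iffD2] bot_in_dL)
  ultimately show "\<exists>b\<in>\<xi> d. \<exists>c\<in>\<xi> d. cominus b c \<in> dL (Suc d)"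
    by blast
qed

lemma hat_le_trans:
  fixes \<xi> \<eta> \<zeta> :: "nat \<Rightarrow> 'a set"
  assumes "\<xi> \<in> hatL" and "\<eta> \<in> hatL" and "\<zeta> \<in> hatL" and "hat_le \<xi> \<eta>" and "hat_le \<eta> \<zeta>"
  shows "hat_le \<xi> \<zeta>"
  unfolding hat_le_iff
proof
  fix d
  obtain b c e where "b \<in> \<xi> d" "c \<in> \<eta> d" "e \<in> \<zeta> d"
    using hatL_component_nonempty[OF assms(1)] hatL_component_nonempty[OF assms(2)]
      hatL_component_nonempty[OF assms(3)]
    by blast
  moreover from this have "cominus b e \<in> dL (Suc d)"
    using cominus_in_dL_trans[OF hat_leD[OF assms(1,2,4)] hat_leD[OF assms(2,3,5)]] by blast
  ultimately show "\<exists>b\<in>\<xi> d. \<exists>e\<in>\<zeta> d. cominus b e \<in> dL (Suc d)"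
    by blast
qed

lemma hat_le_antisym:
  fixes \<xi> \<eta> :: "nat \<Rightarrow> 'a set"
  assumes "\<xi> \<in> hatL" and "\<eta> \<in> hatL" and "hat_le \<xi> \<eta>" and "hat_le \<eta> \<xi>"
  shows "\<xi> = \<eta>"
proof
  fix d
  obtain b c where b: "b \<in> \<xi> d" and c: "c \<in> \<eta> d"
    using hatL_component_nonempty[OF assms(1)] hatL_component_nonempty[OF assms(2)] by blast
  then have "(b, c) \<in> qrel (dL (Suc d))"
    using hat_leD[OF assms(1,2,3) b c] hat_leD[OF assms(2,1,4) c b] by (simp add: qrel_dL_iff)
  with hatL_component[OF assms(1), unfolded quot_def] hatL_component[OF assms(2), unfolded quot_def]
  show "\<xi> d = \<eta> d"
    using quotient_eqI[OF equiv_qrel_dL _ _ b c] by blast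
qed

lemma join_irred_le_of_cominus_in_dL:
  "join_irred (x::'a) \<Longrightarrow> codim x \<le> enat d \<Longrightarrow> cominus x b \<in> dL (Suc d) \<Longrightarrow> x \<le> b"
  by (rule join_irred_le_sup_dL[OF _ _ _ le_sup_cominus])

lemma hat_emb_le_iff:
  assumes ji: "join_irred (x::'a)" and \<xi>: "\<xi> \<in> hatL" and cx: "codim x \<le> enat n"
    and b: "b \<in> \<xi> n"
  shows "hat_le (hat_emb x) \<xi> \<longleftrightarrow> x \<le> b"
proof
  assume "hat_le (hat_emb x) \<xi>"
  then have "cominus x b \<in> dL (Suc n)"
    using hat_leD[OF hat_emb_in_hatL \<xi> _ mem_hat_emb b] by blast
  then show "x \<le> b"
    by (rule join_irred_le_of_cominus_in_dL[OF ji cx])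
next
  assume "x \<le> b"
  show "hat_le (hat_emb x) \<xi>"
    unfolding hat_le_iff
  proof
    fix d
    obtain c where "c \<in> \<xi> (max d n)"
      using hatL_component_nonempty[OF \<xi>] by blast
    then have "c \<in> \<xi> d" and "c \<in> \<xi> n"
      using hatL_antimono[OF \<xi> max.cobounded1] hatL_antimono[OF \<xi> max.cobounded2] by blast+
    then have "cominus b c \<in> dL (Suc n)"
      using qrel_of_hatL_component[OF \<xi> b] by (simp add: qrel_dL_iff)
    then have "cominus x c \<in> dL (Suc n)"
      by (rule dL_down[OF _ cominus_mono[OF \<open>x \<le> b\<close>]])
    then have "x \<le> c"
      by (rule join_irred_le_of_cominus_in_dL[OF ji cx])
    then have "cominus x c \<in> dL (Suc d)"
      by (simp add: cominus_eq_bot_iff[THEN iffD2] bot_in_dL)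
    with mem_hat_emb \<open>c \<in> \<xi> d\<close> show "\<exists>b\<in>hat_emb x d. \<exists>c\<in>\<xi> d. cominus b c \<in> dL (Suc d)"
      by blast
  qed
qed


lemma is_lub_join_irreds_below:
  assumes \<xi>: "\<xi> \<in> hatL"
  shows "is_lub hat_le hatL {hat_emb y | y. join_irred (y::'a) \<and> hat_le (hat_emb y) \<xi>} \<xi>"
  unfolding is_lub_def
proof (intro conjI ballI impI)
  show "\<xi> \<in> hatL"
    by (rule \<xi>)
  show "hat_le \<alpha> \<xi>" if "\<alpha> \<in> {hat_emb y | y. join_irred y \<and> hat_le (hat_emb y) \<xi>}" for \<alpha>
    using that by blast
  fix \<theta> assume \<theta>: "\<theta> \<in> hatL"
    and ub: "\<forall>\<alpha>\<in>{hat_emb y | y. join_irred (y::'a) \<and> hat_le (hat_emb y) \<xi>}. hat_le \<alpha> \<theta>"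
  show "hat_le \<xi> \<theta>"
    unfolding hat_le_iff
  proof
    fix d
    obtain a c where a: "a \<in> \<xi> d" and c: "c \<in> \<theta> d"
      using hatL_component_nonempty[OF \<xi>] hatL_component_nonempty[OF \<theta>] by blast
    let ?G = "{y. join_irred y \<and> y \<le> a \<and> codim y \<le> enat d}"
    have "y \<le> c" if "y \<in> ?G" for y
    proof -
      from that have "hat_le (hat_emb y) \<xi>"
        using hat_emb_le_iff[OF _ \<xi> _ a] by blast
      with ub that have "hat_le (hat_emb y) \<theta>"
        by blast
      with that show "y \<le> c"
        using hat_emb_le_iff[OF _ \<theta> _ c] by blast
    qed
    moreover have "finite ?G"
      by (rule finite_subset[OF _ finite_join_irred_codim_le[of d]]) blast
    ultimately have "Sup_fin (insert bot ?G) \<le> c"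
      by (intro Sup_fin.boundedI) auto
    then have "cominus a c \<le> cominus a (Sup_fin (insert bot ?G))"
      by (rule cominus_antimono)
    then have "cominus a c \<in> dL (Suc d)"
      by (rule dL_down[OF cominus_Sup_join_irreds_in_dL])
    with a c show "\<exists>b\<in>\<xi> d. \<exists>c\<in>\<theta> d. cominus b c \<in> dL (Suc d)"
      by blast
  qed
qed

lemma cji_hatL_imp_hat_emb:
  assumes cji: "\<xi> \<in> cji hat_le hatL (hat_emb (bot::'a))"
  shows "\<xi> \<in> hat_emb ` cji (\<le>) (UNIV::'a set) bot"
proof -
  have \<xi>: "\<xi> \<in> hatL"
    using cji by (simp add: cji_def)
  have "{hat_emb y | y. join_irred (y::'a) \<and> hat_le (hat_emb y) \<xi>} \<subseteq> hatL"
    using hat_emb_in_hatL by blast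
  then obtain y where y: "join_irred y" "hat_le (hat_emb y) \<xi>" and "hat_le \<xi> (hat_emb y)"
    using cji is_lub_join_irreds_below[OF \<xi>] hat_le_refl[OF \<xi>] unfolding cji_def by blast
  then have "\<xi> = hat_emb y"
    using hat_le_antisym[OF \<xi> hat_emb_in_hatL] by blast
  with y(1) show ?thesis
    using join_irred_imp_cji by blast
qed

lemma hat_le_hat_emb_of_member:
  assumes \<alpha>: "\<alpha> \<in> hatL" and M: "dL (Suc n) = {b. b \<le> M}" and b: "b \<in> \<alpha> n"
    and "b \<le> sup u M"
  shows "hat_le \<alpha> (hat_emb (sup u (M::'a)))"
  unfolding hat_le_iff
proof
  fix d
  obtain a where "a \<in> \<alpha> (d + n)"
    using hatL_component_nonempty[OF \<alpha>] by blast
  then have "a \<in> \<alpha> d" and "a \<in> \<alpha> n"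
    using hatL_antimono[OF \<alpha>, of d "d + n"] hatL_antimono[OF \<alpha>, of n "d + n"] by auto
  then have "cominus a b \<in> dL (Suc n)"
    using qrel_of_hatL_component[OF \<alpha> _ b] by (simp add: qrel_dL_iff)
  then have "a \<le> sup b M"
    using M by (simp add: cominus_le_iff)
  also have "\<dots> \<le> sup u M"
    using \<open>b \<le> sup u M\<close> by simp
  finally have "cominus a (sup u M) \<in> dL (Suc d)"
    by (simp add: cominus_eq_bot_iff[THEN iffD2] bot_in_dL)
  with \<open>a \<in> \<alpha> d\<close> mem_hat_emb show "\<exists>a\<in>\<alpha> d. \<exists>c\<in>hat_emb (sup u M) d. cominus a c \<in> dL (Suc d)"
    by blast
qed

text \<open>Representatives in \<open>L/(n+1)L\<close> of the members of \<open>A\<close> fall into finitely many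
  classes, so finitely many of them, joined with the largest element \<open>M\<close> of \<open>dL (n + 1)\<close>,
  bound all of \<open>A\<close>.\<close>

lemma hatL_upper_bound_of_finite_cover:
  assumes A: "A \<subseteq> hatL" and M: "dL (Suc n) = {b. b \<le> M}"
  obtains B0 where "finite B0" and "\<And>b. b \<in> B0 \<Longrightarrow> \<exists>\<alpha>\<in>A. b \<in> \<alpha> n"
    and "\<And>\<alpha>. \<alpha> \<in> A \<Longrightarrow> hat_le \<alpha> (hat_emb (sup (Sup_fin (insert bot B0)) (M::'a)))"
proof -
  define \<rho> where "\<rho> \<alpha> = (SOME b. b \<in> \<alpha> n)" for \<alpha> :: "nat \<Rightarrow> 'a set"
  have \<rho>: "\<rho> \<alpha> \<in> \<alpha> n" if "\<alpha> \<in> A" for \<alpha>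
  proof -
    have "\<alpha> \<in> hatL"
      using that A by blast
    then have "\<exists>b. b \<in> \<alpha> n"
      by (rule hatL_component_nonempty)
    then show ?thesis
      unfolding \<rho>_def by (rule someI_ex)
  qed
  obtain B0 where B0: "B0 \<subseteq> \<rho> ` A" "finite B0" "\<forall>b\<in>\<rho> ` A. \<exists>b0\<in>B0. b \<le> sup b0 M"
    using finite_cover_mod_dL[OF M, of "\<rho> ` A"] by (elim exE conjE)
  define t where "t = Sup_fin (insert bot B0)"
  have "hat_le \<alpha> (hat_emb (sup t M))" if "\<alpha> \<in> A" for \<alpha>
  proof -
    have "\<alpha> \<in> hatL"
      using that A by blast
    from B0(3) that obtain b0 where "b0 \<in> B0" and "\<rho> \<alpha> \<le> sup b0 M"
      by blast
    moreover have "b0 \<le> t"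
      unfolding t_def using \<open>b0 \<in> B0\<close> B0(2) by (simp add: Sup_fin.coboundedI)
    ultimately have "\<rho> \<alpha> \<le> sup t M"
      using order_trans[OF _ sup_mono[OF _ order_refl]] by blast
    then show ?thesis
      by (rule hat_le_hat_emb_of_member[OF \<open>\<alpha> \<in> hatL\<close> M \<rho>[OF that]])
  qed
  moreover have "\<exists>\<alpha>\<in>A. b \<in> \<alpha> n" if "b \<in> B0" for b
    using that B0(1) \<rho> by blast
  ultimately show ?thesis
    using that B0(2) unfolding t_def by blast
qed

lemma join_irred_imp_hat_emb_cji:
  assumes ji: "join_irred (x::'a)"
  shows "hat_emb x \<in> cji hat_le hatL (hat_emb bot)"
proof -
  obtain n where cx: "codim x \<le> enat n"
    using join_irred_codim_finite[OF ji] by (cases "codim x") auto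
  have le_emb_iff: "hat_le (hat_emb x) \<xi> \<longleftrightarrow> x \<le> b" if "\<xi> \<in> hatL" and "b \<in> \<xi> n" for \<xi> b
    by (rule hat_emb_le_iff[OF ji that(1) cx that(2)])
  have not_bot: "\<not> x \<le> bot"
    using ji by (simp add: join_irred_def bot_unique)
  have "hat_emb x \<noteq> hat_emb bot"
    using not_bot hat_le_refl[OF hat_emb_in_hatL, of x] le_emb_iff[OF hat_emb_in_hatL mem_hat_emb]
    by metis
  moreover have "\<exists>\<alpha>\<in>A. hat_le (hat_emb x) \<alpha>"
    if A: "A \<subseteq> hatL" and lub: "is_lub hat_le hatL A S" and xS: "hat_le (hat_emb x) S" for A S
  proof -
    obtain M :: 'a where M: "dL (Suc n) = {b. b \<le> M}"
      using dL_principal by blast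
    obtain B0 where B0: "finite B0" "\<And>b. b \<in> B0 \<Longrightarrow> \<exists>\<alpha>\<in>A. b \<in> \<alpha> n"
      and ub: "\<And>\<alpha>. \<alpha> \<in> A \<Longrightarrow> hat_le \<alpha> (hat_emb (sup (Sup_fin (insert bot B0)) M))"
      using hatL_upper_bound_of_finite_cover[OF A M] by blast
    let ?t = "Sup_fin (insert bot B0)"
    have "hat_le S (hat_emb (sup ?t M))"
      using lub ub hat_emb_in_hatL unfolding is_lub_def by blast
    then have "hat_le (hat_emb x) (hat_emb (sup ?t M))"
      using hat_le_trans[OF hat_emb_in_hatL _ hat_emb_in_hatL xS] lub by (simp add: is_lub_def)
    then have "x \<le> sup ?t M"
      using le_emb_iff[OF hat_emb_in_hatL mem_hat_emb] by blast
    moreover have "M \<in> dL (Suc n)"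
      using M by simp
    ultimately have "x \<le> ?t"
      using join_irred_le_sup_dL[OF ji cx] by blast
    then have "\<exists>b\<in>insert bot B0. x \<le> b"
      by (rule join_irred_le_Sup_fin[OF ji finite.insertI[OF B0(1)] insert_not_empty])
    then obtain b0 where "b0 \<in> B0" and "x \<le> b0"
      using not_bot by blast
    moreover obtain \<alpha> where "\<alpha> \<in> A" and "b0 \<in> \<alpha> n"
      using B0(2)[OF \<open>b0 \<in> B0\<close>] by blast
    moreover have "\<alpha> \<in> hatL"
      using \<open>\<alpha> \<in> A\<close> A by blast
    ultimately show ?thesis
      using le_emb_iff by blast
  qed
  ultimately show ?thesis
    unfolding cji_def using hat_emb_in_hatL by blast
qed

end

theorem proposition6p6:
  fixes T :: "'a::{distrib_lattice,bounded_lattice} itself"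
  assumes "co_heyting T" and "hausdorff T" and "precompact T"
  shows "(cji hat_le hatL (hat_emb (bot::'a)) = hat_emb ` cji (\<le>) (UNIV::'a set) bot)
     \<and> (\<forall>x::'a. join_irred x \<longrightarrow> x \<in> cji (\<le>) UNIV bot)
     \<and> (\<forall>x \<in> cji (\<le>) (UNIV::'a set) bot.
           rank (\<lambda>y x. x < y) (cji (\<le>) UNIV bot) x \<noteq> \<infinity> \<and>
           rank (\<lambda>y x. x < y) (cji (\<le>) UNIV bot) x = codim x)
     \<and> (\<not> (\<exists>f :: nat \<Rightarrow> 'a. (\<forall>n. f n \<in> cji (\<le>) UNIV bot) \<and> (\<forall>n. f n < f (Suc n))))
     \<and> (\<forall>a::'a. is_lub (\<le>) UNIV (ji_components a) a)"
proof -
  interpret precompact_hausdorff_co_heyting T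
    using assms by unfold_locales
  have "cji hat_le hatL (hat_emb (bot::'a)) = hat_emb ` cji (\<le>) (UNIV::'a set) bot"
    using cji_hatL_imp_hat_emb join_irred_imp_hat_emb_cji by (auto simp: cji_iff_join_irred)
  moreover have "rank (\<lambda>y x. x < y) (cji (\<le>) UNIV bot) x \<noteq> \<infinity>"
    if "x \<in> cji (\<le>) (UNIV::'a set) bot" for x
    using that rank_cji_eq_codim join_irred_codim_finite by (simp add: cji_iff_join_irred)
  ultimately show ?thesis
    using join_irred_imp_cji rank_cji_eq_codim cji_no_ascending_chain is_lub_ji_components
    by blast
qed

end
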